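(* Let $S$ be an inverse semigroup. Then every inverse subsemigroup of $S\times S$ containing the diagonal $\{(s,s)\colon s\in S\}$ is a congruence on $S$ if and only if $S$ is a group.
   Context: An inverse semigroup is a semigroup in which every element $s$ has a unique inverse $s^{-1}$, i.e. unique $t$ with $sts=s$, $tst=t$; an inverse subsemigroup is a subsemigroup closed under taking inverses ($S\times S$ is inverse with componentwise inverses). A congruence on $S$ is an equivalence relation on $S$ which is a subsemigroup of $S\times S$. *)

theory Defs
  imports Main
begin

definition is_inv :: "'a::semigroup_mult \<Rightarrow> 'a \<Rightarrow> bool" where
  "is_inv s t \<longleftrightarrow> s * t * s = s \<and> t * s * t = t"

definition inverse_semigroup :: "'a::semigroup_mult set \<Rightarrow> bool" where
  "inverse_semigroup S \<longleftrightarrow> (\<forall>x\<in>S. \<forall>y\<in>S. x * y \<in> S) \<and> (\<forall>s\<in>S. \<exists>!t. t \<in> S \<and> is_inv s t)"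

definition sinv :: "'a::semigroup_mult set \<Rightarrow> 'a \<Rightarrow> 'a" where
  "sinv S s = (THE t. t \<in> S \<and> is_inv s t)"

definition subsemigroup2 :: "'a::semigroup_mult set \<Rightarrow> ('a \<times> 'a) set \<Rightarrow> bool" where
  "subsemigroup2 S R \<longleftrightarrow> R \<subseteq> S \<times> S \<and>
     (\<forall>a b c d. (a, b) \<in> R \<longrightarrow> (c, d) \<in> R \<longrightarrow> (a * c, b * d) \<in> R)"

definition inverse_subsemigroup2 :: "'a::semigroup_mult set \<Rightarrow> ('a \<times> 'a) set \<Rightarrow> bool" where
  "inverse_subsemigroup2 S R \<longleftrightarrow> subsemigroup2 S R \<and>
     (\<forall>a b. (a, b) \<in> R \<longrightarrow> (sinv S a, sinv S b) \<in> R)"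

definition semigroup_congruence :: "'a::semigroup_mult set \<Rightarrow> ('a \<times> 'a) set \<Rightarrow> bool" where
  "semigroup_congruence S R \<longleftrightarrow> equiv S R \<and> subsemigroup2 S R"

definition is_group :: "'a::semigroup_mult set \<Rightarrow> bool" where
  "is_group S \<longleftrightarrow> (\<forall>x\<in>S. \<forall>y\<in>S. x * y \<in> S) \<and>
     (\<exists>e\<in>S. (\<forall>x\<in>S. e * x = x \<and> x * e = x) \<and> (\<forall>x\<in>S. \<exists>y\<in>S. x * y = e \<and> y * x = e))"

end

theory Submission
  imports Defs
begin

text \<open>
  If S is a group, an inverse subsemigroup R of S \<times> S containing the diagonal is symmetric
  and transitive: from (a, b) \<in> R multiply by (b, b) on the left, by the inverse pair
  (a\<inverse>, b\<inverse>) and by (a, a) on the right to obtain (b, a); transitivity is similar.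

  Conversely, the natural partial order a \<le> b \<longleftrightarrow> a = g b with g idempotent is always an
  inverse subsemigroup of S \<times> S containing the diagonal, because idempotents of an inverse
  semigroup commute. If it is a congruence it is symmetric, and then for idempotents e, f
  the relation e f \<le> f forces e f = f, so S has exactly one idempotent. An inverse semigroup
  with a single idempotent e is a group: s s\<inverse> = s\<inverse> s = e for every s.
\<close>

lemma idempotent_mult_left: "(e::'a::semigroup_mult) * e = e \<Longrightarrow> e * (e * z) = e * z"
  by (metis mult.assoc)

locale inv_semigroup =
  fixes S :: "'a::semigroup_mult set"
  assumes inverse_semigroup: "inverse_semigroup S"
begin

lemma mult_closed: "x \<in> S \<Longrightarrow> y \<in> S \<Longrightarrow> x * y \<in> S"
  using inverse_semigroup unfolding inverse_semigroup_def by blast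

lemma sinv_closed: "s \<in> S \<Longrightarrow> sinv S s \<in> S"
  and is_inv_sinv: "s \<in> S \<Longrightarrow> is_inv s (sinv S s)"
  using inverse_semigroup theI'[of "\<lambda>t. t \<in> S \<and> is_inv s t"]
  unfolding inverse_semigroup_def sinv_def by blast+

lemma sinv_unique: "s \<in> S \<Longrightarrow> t \<in> S \<Longrightarrow> is_inv s t \<Longrightarrow> sinv S s = t"
  using inverse_semigroup sinv_closed is_inv_sinv unfolding inverse_semigroup_def by blast

lemma mult_sinv_mult: "s \<in> S \<Longrightarrow> s * sinv S s * s = s"
  and sinv_mult_sinv: "s \<in> S \<Longrightarrow> sinv S s * s * sinv S s = sinv S s"
  using is_inv_sinv unfolding is_inv_def by auto

lemma idempotent_mult_sinv: "s \<in> S \<Longrightarrow> s * sinv S s * (s * sinv S s) = s * sinv S s"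
  using mult_sinv_mult by (metis mult.assoc)

lemma idempotent_sinv_mult: "s \<in> S \<Longrightarrow> sinv S s * s * (sinv S s * s) = sinv S s * s"
  using sinv_mult_sinv by (metis mult.assoc)

lemma idempotent_mult:
  assumes e: "e \<in> S" "e * e = e" and f: "f \<in> S" "f * f = f"
  shows "e * f * (e * f) = e * f"
proof -
  have ef: "e * f \<in> S" using e f mult_closed by auto
  define x where "x = sinv S (e * f)"
  have x: "x \<in> S" "is_inv (e * f) x" "is_inv x (e * f)"
    using sinv_closed[OF ef] is_inv_sinv[OF ef] unfolding x_def is_inv_def by auto
  have x_sandwich: "x * (e * (f * (x * z))) = x * z" for z
    using x(2) unfolding is_inv_def by (metis mult.assoc)
  \<comment> \<open>f x e is also an inverse of e f, so x = f x e, which makes x idempotent.\<close>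
  have "is_inv (e * f) (f * x * e)"
    using x(2) x_sandwich idempotent_mult_left[of e] idempotent_mult_left[of f] e f
    unfolding is_inv_def by (simp add: mult.assoc)
  then have x_eq: "x = f * x * e"
    using sinv_unique[OF ef] mult_closed x(1) e f unfolding x_def by simp
  have "x * x = f * (x * (e * (f * x))) * e"
    using x_eq by (metis mult.assoc)
  also have "\<dots> = x"
    using x(2) x_eq unfolding is_inv_def by (simp add: mult.assoc)
  finally have xx: "x * x = x" .
  have "sinv S x = x" using sinv_unique[OF x(1) x(1)] xx unfolding is_inv_def by simp
  moreover have "sinv S x = e * f" using sinv_unique[OF x(1) ef x(3)] .
  ultimately show ?thesis using xx by simp
qed

lemma idempotents_commute:
  assumes e: "e \<in> S" "e * e = e" and f: "f \<in> S" "f * f = f"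
  shows "e * f = f * e"
proof -
  have ef: "e * f \<in> S" "f * e \<in> S" using e f mult_closed by auto
  have ef_idem: "e * f * (e * f) = e * f" and fe_idem: "f * e * (f * e) = f * e"
    using idempotent_mult e f by blast+
  have "sinv S (e * f) = e * f"
    using sinv_unique ef ef_idem unfolding is_inv_def by simp
  moreover have "is_inv (e * f) (f * e)"
    using ef_idem fe_idem idempotent_mult_left[of e] idempotent_mult_left[of f] e f
    unfolding is_inv_def by (simp add: mult.assoc)
  then have "sinv S (e * f) = f * e" using sinv_unique ef by simp
  ultimately show ?thesis by simp
qed

definition natural_order :: "('a \<times> 'a) set" where
  "natural_order = {(a, b). a \<in> S \<and> b \<in> S \<and> (\<exists>g\<in>S. g * g = g \<and> a = g * b)}"

lemma Id_on_subset_natural_order: "Id_on S \<subseteq> natural_order"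
proof
  fix p assume "p \<in> Id_on S"
  then obtain b where b: "b \<in> S" "p = (b, b)" by auto
  have "b * sinv S b \<in> S" using mult_closed sinv_closed b by blast
  moreover have "b = b * sinv S b * b" using mult_sinv_mult b by simp
  ultimately show "p \<in> natural_order"
    unfolding natural_order_def using b idempotent_mult_sinv[OF b(1)] by blast
qed

lemma natural_order_mult:
  assumes "(a, b) \<in> natural_order" and "(c, d) \<in> natural_order"
  shows "(a * c, b * d) \<in> natural_order"
proof -
  obtain g where g: "g \<in> S" "g * g = g" "a = g * b" "b \<in> S"
    using assms(1) unfolding natural_order_def by blast
  obtain h where h: "h \<in> S" "h * h = h" "c = h * d" "d \<in> S"
    using assms(2) unfolding natural_order_def by blast
  define b' where "b' = sinv S b"
  have b': "b' \<in> S" "b * b' * b = b"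
    using sinv_closed mult_sinv_mult[of b] g unfolding b'_def by auto
  have "h * (b' * b) = b' * b * h"
    using idempotents_commute h mult_closed b' g idempotent_sinv_mult unfolding b'_def by auto
  \<comment> \<open>Moving h past b: b h = m b with the idempotent m = b h b'.\<close>
  define m where "m = b * h * b'"
  have mb: "m * b = b * h"
  proof -
    have "m * b = b * (h * (b' * b))" unfolding m_def by (simp add: mult.assoc)
    also have "\<dots> = b * b' * b * h" using \<open>h * (b' * b) = b' * b * h\<close> by (simp add: mult.assoc)
    finally show ?thesis using b'(2) by simp
  qed
  have mm: "m * m = m"
  proof -
    have "m * m = (m * b) * h * b'" unfolding m_def by (simp add: mult.assoc)
    also have "\<dots> = m" using mb h unfolding m_def by (simp add: mult.assoc)
    finally show ?thesis .
  qed
  have m: "m \<in> S" unfolding m_def using mult_closed b' g h by auto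
  have "(g * m) * (b * d) = g * (m * b) * d" by (simp add: mult.assoc)
  also have "\<dots> = a * c" unfolding mb using g h by (simp add: mult.assoc)
  finally have "a * c = (g * m) * (b * d)" by simp
  moreover have "g * m * (g * m) = g * m" using idempotent_mult g m mm by blast
  ultimately show ?thesis
    unfolding natural_order_def using mult_closed g h m assms by auto
qed

lemma natural_order_sinv:
  assumes "(a, b) \<in> natural_order"
  shows "(sinv S a, sinv S b) \<in> natural_order"
proof -
  obtain g where g: "g \<in> S" "g * g = g" "a = g * b" "a \<in> S" "b \<in> S"
    using assms unfolding natural_order_def by blast
  define b' where "b' = sinv S b"
  have b': "b' \<in> S" "b * (b' * b) = b" "b' * (b * b') = b'"
    using sinv_closed mult_sinv_mult[of b] sinv_mult_sinv[of b] g unfolding b'_def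
    by (auto simp: mult.assoc)
  have com: "g * (b * b') = b * b' * g"
    using idempotents_commute g mult_closed b' idempotent_mult_sinv unfolding b'_def by auto
  then have com_left: "g * (b * (b' * z)) = b * (b' * (g * z))" for z by (metis mult.assoc)
  have "is_inv a (b' * g)"
  proof -
    have "g * b * (b' * g) * (g * b) = g * g * (b * (b' * b))"
      using com_left idempotent_mult_left[OF g(2)] by (simp add: mult.assoc)
    moreover have "b' * g * (g * b) * (b' * g) = b' * (b * b') * (g * g)"
      using com_left idempotent_mult_left[OF g(2)] by (simp add: mult.assoc)
    ultimately show ?thesis using g b' unfolding is_inv_def by simp
  qed
  then have "sinv S a = b' * g" using sinv_unique g b' mult_closed by auto
  \<comment> \<open>Moving g past b': b' g = k b' with the idempotent k = b' g b.\<close>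
  define k where "k = b' * g * b"
  have kb: "k * b' = b' * g"
  proof -
    have "k * b' = b' * (g * (b * b'))" unfolding k_def by (simp add: mult.assoc)
    also have "\<dots> = b' * (b * b') * g" using com by (simp add: mult.assoc)
    finally show ?thesis using b'(3) by simp
  qed
  have "k * k = k"
  proof -
    have "k * k = (k * b') * g * b" unfolding k_def by (simp add: mult.assoc)
    also have "\<dots> = k" using kb g unfolding k_def by (simp add: mult.assoc)
    finally show ?thesis .
  qed
  moreover have "k \<in> S" unfolding k_def using mult_closed g b' by auto
  moreover have "sinv S a = k * b'" using \<open>sinv S a = b' * g\<close> kb by simp
  ultimately show ?thesis
    using b'(1) sinv_closed[OF \<open>a \<in> S\<close>] unfolding natural_order_def b'_def by blast
qed

lemma inverse_subsemigroup2_natural_order: "inverse_subsemigroup2 S natural_order"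
proof -
  have "natural_order \<subseteq> S \<times> S" unfolding natural_order_def by auto
  then show ?thesis unfolding inverse_subsemigroup2_def subsemigroup2_def
    using natural_order_mult natural_order_sinv by blast
qed

lemma sym_natural_order_imp_idempotents_eq:
  assumes sym: "sym natural_order"
    and e: "e \<in> S" "e * e = e" and f: "f \<in> S" "f * f = f"
  shows "e = f"
proof -
  have absorb: "x * y = y" if x: "x \<in> S" "x * x = x" and y: "y \<in> S" "y * y = y" for x y
  proof -
    have "(x * y, y) \<in> natural_order"
      unfolding natural_order_def using x y mult_closed by auto
    then have "(y, x * y) \<in> natural_order" by (rule symD[OF sym])
    then have "\<exists>g\<in>S. g * g = g \<and> y = g * (x * y)"
      unfolding natural_order_def by (simp only: mem_Collect_eq case_prod_conv)
    then obtain g where g: "g \<in> S" "g * g = g" "y = g * (x * y)" by (elim bexE conjE)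
    have "x * y = x * (g * (x * y))" using arg_cong[OF g(3), of "(*) x"] .
    also have "\<dots> = g * (x * (x * y))"
      using idempotents_commute[OF x g(1,2)] by (metis mult.assoc)
    also have "\<dots> = y" using g(3)[symmetric] idempotent_mult_left[OF x(2)] by simp
    finally show ?thesis .
  qed
  show ?thesis using absorb[OF e f] absorb[OF f e] idempotents_commute[OF e f] by simp
qed

lemma unique_idempotent_imp_group:
  assumes "S \<noteq> {}" and unique: "\<And>e f. e \<in> S \<Longrightarrow> e * e = e \<Longrightarrow> f \<in> S \<Longrightarrow> f * f = f \<Longrightarrow> e = f"
  shows "is_group S"
proof -
  obtain s where s: "s \<in> S" using assms(1) by blast
  define e where "e = s * sinv S s"
  have e: "e \<in> S" "e * e = e"
    unfolding e_def using mult_closed sinv_closed idempotent_mult_sinv s by auto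
  have right_inv: "x * sinv S x = e" and left_inv: "sinv S x * x = e" if "x \<in> S" for x
    using unique[OF _ idempotent_mult_sinv[OF that] e] unique[OF _ idempotent_sinv_mult[OF that] e]
      mult_closed sinv_closed that by auto
  have "\<forall>x\<in>S. e * x = x \<and> x * e = x"
  proof
    fix x assume x: "x \<in> S"
    have "e * x = x * sinv S x * x" by (simp only: right_inv[OF x])
    moreover have "x * e = x * (sinv S x * x)" by (simp only: left_inv[OF x])
    ultimately show "e * x = x \<and> x * e = x" using mult_sinv_mult[OF x] by (simp only: mult.assoc)
  qed
  moreover have "\<forall>x\<in>S. \<exists>y\<in>S. x * y = e \<and> y * x = e"
    using right_inv left_inv sinv_closed by blast
  ultimately show ?thesis unfolding is_group_def using mult_closed e(1) by blast
qed

lemma congruence_if_group: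
  assumes group: "is_group S" and R: "inverse_subsemigroup2 S R" and diag: "Id_on S \<subseteq> R"
  shows "semigroup_congruence S R"
proof -
  obtain e where e: "e \<in> S" "\<And>x. x \<in> S \<Longrightarrow> e * x = x \<and> x * e = x"
    and inv: "\<And>x. x \<in> S \<Longrightarrow> \<exists>y\<in>S. x * y = e \<and> y * x = e"
    using group unfolding is_group_def by metis
  have sinv_group_inv: "x * sinv S x = e \<and> sinv S x * x = e" if x: "x \<in> S" for x
  proof -
    obtain y where y: "y \<in> S" "x * y = e" "y * x = e" using inv[OF x] by blast
    then have "sinv S x = y" using sinv_unique x e unfolding is_inv_def by simp
    then show ?thesis using y by simp
  qed
  have sub: "R \<subseteq> S \<times> S"
    and mul: "\<And>a b c d. (a, b) \<in> R \<Longrightarrow> (c, d) \<in> R \<Longrightarrow> (a * c, b * d) \<in> R"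
    and inv_pair: "\<And>a b. (a, b) \<in> R \<Longrightarrow> (sinv S a, sinv S b) \<in> R"
    using R unfolding inverse_subsemigroup2_def subsemigroup2_def by blast+
  have diag': "x \<in> S \<Longrightarrow> (x, x) \<in> R" for x using diag by auto
  have "sym R"
  proof (rule symI)
    fix a b assume ab: "(a, b) \<in> R"
    then have "a \<in> S" "b \<in> S" using sub by auto
    have "(b * sinv S a * a, b * sinv S b * a) \<in> R"
      using mul[OF mul[OF diag'[OF \<open>b \<in> S\<close>] inv_pair[OF ab]] diag'[OF \<open>a \<in> S\<close>]] .
    then show "(b, a) \<in> R"
      using sinv_group_inv \<open>a \<in> S\<close> \<open>b \<in> S\<close> e by (simp add: mult.assoc)
  qed
  moreover have "trans R"
  proof (rule transI)
    fix a b c assume ab: "(a, b) \<in> R" and bc: "(b, c) \<in> R"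
    then have "a \<in> S" "b \<in> S" "c \<in> S" using sub by auto
    have "(a * sinv S b * b, b * sinv S b * c) \<in> R"
      using mul[OF mul[OF ab diag'[OF sinv_closed[OF \<open>b \<in> S\<close>]]] bc] .
    then show "(a, c) \<in> R"
      using sinv_group_inv \<open>a \<in> S\<close> \<open>b \<in> S\<close> \<open>c \<in> S\<close> e by (simp add: mult.assoc)
  qed
  moreover have "refl_on S R" using sub diag unfolding refl_on_def by auto
  moreover have "subsemigroup2 S R" using R unfolding inverse_subsemigroup2_def by blast
  ultimately show ?thesis using sub unfolding semigroup_congruence_def equiv_def by blast
qed

end

theorem mainTheorem9:
  fixes S :: "'a::semigroup_mult set"
  assumes "inverse_semigroup S" and "S \<noteq> {}"
  shows "(\<forall>R. inverse_subsemigroup2 S R \<and> Id_on S \<subseteq> R \<longrightarrow> semigroup_congruence S R)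
         \<longleftrightarrow> is_group S"
proof -
  interpret inv_semigroup S using assms(1) by unfold_locales
  show ?thesis
  proof
    assume "\<forall>R. inverse_subsemigroup2 S R \<and> Id_on S \<subseteq> R \<longrightarrow> semigroup_congruence S R"
    then have "semigroup_congruence S natural_order"
      using inverse_subsemigroup2_natural_order Id_on_subset_natural_order by blast
    then have "sym natural_order" unfolding semigroup_congruence_def equiv_def by blast
    then show "is_group S"
      using unique_idempotent_imp_group[OF assms(2)] sym_natural_order_imp_idempotents_eq by blast
  next
    assume "is_group S"
    then show "\<forall>R. inverse_subsemigroup2 S R \<and> Id_on S \<subseteq> R \<longrightarrow> semigroup_congruence S R"
      using congruence_if_group by blast
  qed
qed

end
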